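(* Let $\Omega=(a,b)$, $1<p<\infty$, $k\ge1$, and $m,n$ measurable on $(a,b)$ with $0<\theta_-\le m,n\le\theta_+$. Fix a sign $\pm$, let $s>0$, $(\alpha(s),\beta(s))=(s^{-1}c^\pm_{k+1}(s),c^\pm_{k+1}(s))\in\mathcal{C}^\pm_k(m,n)$, and let $u\in W^{1,p}_0(a,b)$ be a nontrivial weak solution of $-(|u'|^{p-2}u')'=\alpha(s)m(u^+)^{p-1}-\beta(s)n(u^-)^{p-1}$ on $(a,b)$, $u(a)=u(b)=0$. Let $I_+$ be a nodal domain (maximal open interval) of $u$ on which $u>0$ and $I_-$ one on which $u<0$. Then $$\mu_1(I_+)\le C\gamma(s),\qquad \mu_1(I_-)\le Cs\gamma(s),$$ where $C=\frac{\theta_+}{\theta_-}\mu_{k+1}(\Omega)$, $\gamma(s)=1$ for $s\ge1$, $\gamma(s)=s^{-1}$ for $s<1$, $\mu_1(I)$ is the first Dirichlet eigenvalue of the one-dimensional $p$-Laplacian on $I$, and $\mu_{k+1}(\Omega)=\pi_p^p(k+1)^p(b-a)^{-p}$.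
   Context: $u^\pm=\max\{\pm u,0\}$. For an interval $I$ and weight $r$, $\lambda_1(r,I)=\inf\{\int_I|v'|^p/\int_I r|v|^p:\ v\in W^{1,p}_0(I)\setminus\{0\}\}$; $\mu_1(I)=\lambda_1(1,I)=\pi_p^p|I|^{-p}$ with $\pi_p=2(p-1)^{1/p}\int_0^1(1-t^p)^{-1/p}dt$. A partition in $\mathcal{P}_{k+1}$ is $a=t_0<\dots<t_{k+1}=b$, $I_j=(t_{j-1},t_j)$. $c^+_{k+1}(s)=\inf_{\mathcal{P}_{k+1}}\max\big(\{s\lambda_1(m,I_j): j\text{ odd}\}\cup\{\lambda_1(n,I_j): j\text{ even}\}\big)$ and $c^-_{k+1}(s)$ likewise with "odd" and "even" interchanged. $\mathcal{C}^\pm_k(m,n)$ is the Fučík curve whose eigenfunctions have $k$ interior zeros and positive (resp. negative) slope at $a$; $(s^{-1}c^\pm_{k+1}(s),c^\pm_{k+1}(s))$ is its intersection with the line $\beta=s\alpha$. *)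

theory Defs
  imports "HOL-Analysis.Analysis"
begin

(* v \<in> W^{1,p}_0(c,d) with weak derivative g (1D: absolutely continuous
   representative with L^p derivative and zero boundary values) *)
definition w1p0 :: "real \<Rightarrow> real \<Rightarrow> real \<Rightarrow> (real \<Rightarrow> real) \<Rightarrow> (real \<Rightarrow> real) \<Rightarrow> bool" where
  "w1p0 p c d v g \<longleftrightarrow>
     set_integrable lborel {c..d} g \<and>
     set_integrable lborel {c..d} (\<lambda>t. \<bar>g t\<bar> powr p) \<and>
     (\<forall>x\<in>{c..d}. v x = (LINT t:{c..x}|lborel. g t)) \<and>
     v c = 0 \<and> v d = 0"

definition lambda1 :: "real \<Rightarrow> (real \<Rightarrow> real) \<Rightarrow> real \<Rightarrow> real \<Rightarrow> real" where
  "lambda1 p r c d = Inf {(LINT t:{c..d}|lborel. \<bar>g t\<bar> powr p) /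
                          (LINT t:{c..d}|lborel. r t * \<bar>v t\<bar> powr p) | v g.
                          w1p0 p c d v g \<and> (\<exists>x\<in>{c<..<d}. v x \<noteq> 0)}"

definition pi_p :: "real \<Rightarrow> real" where
  "pi_p p = 2 * (p - 1) powr (1 / p) * (LINT t:{0..1}|lborel. (1 - t powr p) powr (- 1 / p))"

(* mu_1(I) = pi_p^p |I|^{-p}, as a function of the length L = |I| *)
definition mu1 :: "real \<Rightarrow> real \<Rightarrow> real" where
  "mu1 p L = pi_p p powr p * L powr (- p)"

definition partition :: "real \<Rightarrow> real \<Rightarrow> nat \<Rightarrow> (nat \<Rightarrow> real) \<Rightarrow> bool" where
  "partition a b k t \<longleftrightarrow> t 0 = a \<and> t (Suc k) = b \<and> (\<forall>j\<le>k. t j < t (Suc j))"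

(* c^+_{k+1}(s) if pos = True, c^-_{k+1}(s) if pos = False *)
definition cpm :: "bool \<Rightarrow> real \<Rightarrow> (real \<Rightarrow> real) \<Rightarrow> (real \<Rightarrow> real) \<Rightarrow> real \<Rightarrow> real \<Rightarrow> nat \<Rightarrow> real \<Rightarrow> real" where
  "cpm pos p m n a b k s = Inf ((\<lambda>t. Max ((\<lambda>j. if odd j = pos then s * lambda1 p m (t (j - 1)) (t j)
                                                 else lambda1 p n (t (j - 1)) (t j)) ` {1..Suc k}))
                              ` {t. partition a b k t})"

definition nodal_domain :: "bool \<Rightarrow> (real \<Rightarrow> real) \<Rightarrow> real \<Rightarrow> real \<Rightarrow> real \<Rightarrow> real \<Rightarrow> bool" where
  "nodal_domain sg u a b c d \<longleftrightarrow> c < d \<and> a \<le> c \<and> d \<le> b \<and>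
     (\<forall>x\<in>{c<..<d}. if sg then u x > 0 else u x < 0) \<and>
     (\<forall>c' d'. c' \<le> c \<longrightarrow> d \<le> d' \<longrightarrow> a \<le> c' \<longrightarrow> d' \<le> b \<longrightarrow>
        (\<forall>x\<in>{c'<..<d'}. if sg then u x > 0 else u x < 0) \<longrightarrow> c' = c \<and> d' = d)"

definition gamma :: "real \<Rightarrow> real" where
  "gamma s = (if s \<ge> 1 then 1 else 1 / s)"

end

(* Testing the equation with u restricted to a nodal domain I (and extended by zero) gives
   int_I |u'|^p = (c/s) int_I m |u|^p on a positive and int_I |u'|^p = c int_I n |u|^p on a
   negative domain, where c = c^pm_{k+1}(s).  As m, n <= theta_+, the unweighted Rayleigh
   quotient of u then bounds lambda_1(1,I) by (c/s) theta_+ resp. c theta_+.  In turn, c is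
   at most the cost of the partition of (a,b) into k+1 intervals of equal length, and as
   m, n >= theta_- each piece has weighted eigenvalue at most lambda_1(1,piece) / theta_-.
   Both estimates are expressed through the scaling law lambda_1(1,I) = K |I|^(-p) with
   K = lambda_1(1,(0,1)).  Since K >= 1 by a Poincare inequality, K cancels. *)

theory Submission
  imports Defs
begin

section \<open>Functions in W^{1,p}_0 of an interval\<close>

lemma w1p0_integrable_on:
  assumes "w1p0 p c d v g"
  shows "g integrable_on {c..d}"
  using assms set_borel_integral_eq_integral(1) unfolding w1p0_def by blast

lemma w1p0_eq_integral:
  assumes "w1p0 p c d v g" "x \<in> {c..d}"
  shows "v x = integral {c..x} g"
proof -
  have "set_integrable lborel {c..x} g"
    by (rule set_integrable_subset[of _ "{c..d}"]) (use assms in \<open>auto simp: w1p0_def\<close>)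
  then show ?thesis
    using assms set_borel_integral_eq_integral(2) unfolding w1p0_def by metis
qed

lemma w1p0_eq_increment:
  assumes "w1p0 p a b u g" "a \<le> c" "c \<le> x" "x \<le> b"
  shows "u x = u c + integral {c..x} g"
proof -
  have "g integrable_on {a..x}"
    using integrable_on_subinterval[OF w1p0_integrable_on[OF assms(1)]] assms by auto
  then have "integral {a..x} g = integral {a..c} g + integral {c..x} g"
    using Henstock_Kurzweil_Integration.integral_combine assms(2,3) by metis
  then show ?thesis
    using w1p0_eq_integral[OF assms(1)] assms by auto
qed

lemma continuous_on_w1p0:
  assumes "w1p0 p c d v g"
  shows "continuous_on {c..d} v"
proof -
  have "continuous_on {c..d} (\<lambda>x. integral {c..x} g)"
    using indefinite_integral_continuous_1 w1p0_integrable_on[OF assms] by blast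
  then show ?thesis
    by (rule continuous_on_cong[THEN iffD1, rotated 2]) (use w1p0_eq_integral[OF assms] in auto)
qed

lemma continuous_on_abs_powr:
  fixes f :: "'a::topological_space \<Rightarrow> real"
  assumes "continuous_on S f" "0 < p"
  shows "continuous_on S (\<lambda>x. \<bar>f x\<bar> powr p)"
  using continuous_on_powr'[of S "\<lambda>x. \<bar>f x\<bar>" "\<lambda>x. p"] assms
  by (auto intro: continuous_intros)

lemma w1p0_abs_powr_integral_pos:
  assumes "w1p0 p c d v g" "0 < p" "x \<in> {c<..<d}" "v x \<noteq> 0"
  shows "set_integrable lborel {c..d} (\<lambda>t. \<bar>v t\<bar> powr p)"
    and "0 < (LINT t:{c..d}|lborel. \<bar>v t\<bar> powr p)"
proof -
  have cont: "continuous_on {c..d} (\<lambda>t. \<bar>v t\<bar> powr p)"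
    using continuous_on_abs_powr[OF continuous_on_w1p0[OF assms(1)] assms(2)] .
  show si: "set_integrable lborel {c..d} (\<lambda>t. \<bar>v t\<bar> powr p)"
    using borel_integrable_atLeastAtMost'[OF cont] .
  have "integral {c..d} (\<lambda>t. \<bar>v t\<bar> powr p) \<ge> 0"
    by (rule integral_nonneg) (use integrable_continuous_interval[OF cont] in auto)
  moreover have "integral {c..d} (\<lambda>t. \<bar>v t\<bar> powr p) \<noteq> 0"
    using integral_eq_0_iff[OF cont] assms(3,4) by fastforce
  ultimately show "0 < (LINT t:{c..d}|lborel. \<bar>v t\<bar> powr p)"
    using set_borel_integral_eq_integral(2)[OF si] by linarith
qed

lemma w1p0_nontrivial_exists:
  assumes "c < d" "0 < p"
  shows "\<exists>v g. w1p0 p c d v g \<and> (\<exists>x\<in>{c<..<d}. v x \<noteq> 0)"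
proof -
  define v where "v = (\<lambda>t::real. (t - c) * (d - t))"
  define g where "g = (\<lambda>t::real. c + d - 2 * t)"
  have cont: "continuous_on S g" for S unfolding g_def by (intro continuous_intros)
  have "w1p0 p c d v g"
    unfolding w1p0_def
  proof (intro conjI ballI)
    show "set_integrable lborel {c..d} g" using borel_integrable_atLeastAtMost'[OF cont] .
    show "set_integrable lborel {c..d} (\<lambda>t. \<bar>g t\<bar> powr p)"
      using borel_integrable_atLeastAtMost'[OF continuous_on_abs_powr[OF cont assms(2)]] .
    show "v c = 0" "v d = 0" unfolding v_def by auto
    fix x assume x: "x \<in> {c..d}"
    have "(LINT t:{c..x}|lborel. g t) = v x - v c"
      unfolding set_lebesgue_integral_def
      by (rule integral_FTC_atLeastAtMost)
        (use x cont in \<open>auto simp: v_def g_def intro!: derivative_eq_intros\<close>)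
    then show "v x = (LINT t:{c..x}|lborel. g t)" by (simp add: v_def)
  qed
  moreover have "(c + d) / 2 \<in> {c<..<d}" "v ((c + d) / 2) \<noteq> 0"
    using assms unfolding v_def by auto
  ultimately show ?thesis by blast
qed

lemma w1p0_restrict:
  assumes U: "w1p0 p a b u g" and "a \<le> c" "c < d" "d \<le> b" "u c = 0" "u d = 0"
  shows "w1p0 p c d u g"
  unfolding w1p0_def
proof (intro conjI ballI)
  show gi: "set_integrable lborel {c..d} g" "set_integrable lborel {c..d} (\<lambda>t. \<bar>g t\<bar> powr p)"
    by (rule set_integrable_subset[of _ "{a..b}"]; use U assms in \<open>auto simp: w1p0_def\<close>)+
  show "u c = 0" "u d = 0" by fact+
  fix x assume x: "x \<in> {c..d}"
  have "set_integrable lborel {c..x} g"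
    by (rule set_integrable_subset[OF gi(1)]) (use x in auto)
  then show "u x = (LINT t:{c..x}|lborel. g t)"
    using w1p0_eq_increment[OF U, of c x] x assms by (simp add: set_borel_integral_eq_integral(2))
qed

lemma w1p0_extend_zero:
  fixes u g :: "real \<Rightarrow> real"
  assumes U: "w1p0 p a b u g" and cd: "a \<le> c" "c < d" "d \<le> b" and uc: "u c = 0" and ud: "u d = 0"
  shows "w1p0 p a b (\<lambda>x. if x \<in> {c..d} then u x else 0) (\<lambda>x. indicator {c..d} x * g x)"
  unfolding w1p0_def
proof (intro conjI ballI)
  have gcd: "set_integrable lborel {c..d} g" "set_integrable lborel {c..d} (\<lambda>t. \<bar>g t\<bar> powr p)"
    using w1p0_restrict[OF assms] unfolding w1p0_def by auto
  have ind: "indicator {a..b} x * indicator {c..d} x = (indicator {c..d} x :: real)" for x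
    using cd by (auto simp: indicator_def)
  show si: "set_integrable lborel {a..b} (\<lambda>x. indicator {c..d} x * g x)"
    using gcd(1) unfolding set_integrable_def by (simp add: mult.assoc[symmetric] ind)
  have "(\<lambda>x. indicator {a..b} x *\<^sub>R \<bar>indicator {c..d} x * g x\<bar> powr p) =
      (\<lambda>x. indicator {c..d} x *\<^sub>R \<bar>g x\<bar> powr p)"
    using cd by (auto simp: indicator_def)
  then show "set_integrable lborel {a..b} (\<lambda>x. \<bar>indicator {c..d} x * g x\<bar> powr p)"
    using gcd(2) unfolding set_integrable_def by simp
  show "(if a \<in> {c..d} then u a else 0) = 0" "(if b \<in> {c..d} then u b else 0) = 0"
    using cd uc ud by auto
  fix x assume x: "x \<in> {a..b}"
  have "set_integrable lborel {a..x} (\<lambda>x. indicator {c..d} x * g x)"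
    by (rule set_integrable_subset[OF si]) (use x in auto)
  then have "(LINT t:{a..x}|lborel. indicator {c..d} t * g t) = integral {a..x} (\<lambda>t. indicator {c..d} t * g t)"
    by (rule set_borel_integral_eq_integral(2))
  also have "\<dots> = integral ({c..d} \<inter> {a..x}) g"
    by (subst integral_restrict_Int[symmetric]) (auto intro!: integral_cong simp: indicator_def)
  also have "\<dots> = (if x \<in> {c..d} then u x else 0)"
  proof -
    consider "x < c" | "c \<le> x" "x \<le> d" | "d < x" by linarith
    then show ?thesis
    proof cases
      case 2
      then have "{c..d} \<inter> {a..x} = {c..x}" using cd by auto
      then show ?thesis using w1p0_eq_increment[OF U, of c x] uc 2 cd by auto
    next
      case 3
      then have "{c..d} \<inter> {a..x} = {c..d}" using cd by auto
      then show ?thesis using w1p0_eq_increment[OF U, of c d] uc ud 3 cd by auto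
    qed auto
  qed
  finally show "(if x \<in> {c..d} then u x else 0) = (LINT t:{a..x}|lborel. indicator {c..d} t * g t)"
    by simp
qed

section \<open>Rayleigh quotients and the first eigenvalue\<close>

definition rayleigh ::
    "real \<Rightarrow> (real \<Rightarrow> real) \<Rightarrow> real \<Rightarrow> real \<Rightarrow> (real \<Rightarrow> real) \<Rightarrow> (real \<Rightarrow> real) \<Rightarrow> real" where
  "rayleigh p r c d v g =
     (LINT t:{c..d}|lborel. \<bar>g t\<bar> powr p) / (LINT t:{c..d}|lborel. r t * \<bar>v t\<bar> powr p)"

lemma lambda1_eq_Inf_rayleigh:
  "lambda1 p r c d = Inf {rayleigh p r c d v g | v g. w1p0 p c d v g \<and> (\<exists>x\<in>{c<..<d}. v x \<noteq> 0)}"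
  unfolding lambda1_def rayleigh_def ..

lemma AE_lborel_neq_endpoints: "AE x in lborel. x \<noteq> c \<and> x \<noteq> (d::real)"
  using AE_lborel_singleton[of c] AE_lborel_singleton[of d] by eventually_elim auto

lemma rayleigh_nonneg:
  assumes "\<forall>x\<in>{c<..<d}. 0 \<le> r x"
  shows "0 \<le> rayleigh p r c d v g"
proof -
  have "AE x in lborel. 0 \<le> indicator {c..d} x *\<^sub>R (r x * \<bar>v x\<bar> powr p)"
    using AE_lborel_neq_endpoints[of c d]
    by eventually_elim (use assms in \<open>auto simp: indicator_def\<close>)
  then have "0 \<le> (LINT t:{c..d}|lborel. r t * \<bar>v t\<bar> powr p)"
    unfolding set_lebesgue_integral_def by (rule integral_nonneg_AE)
  moreover have "0 \<le> (LINT t:{c..d}|lborel. \<bar>g t\<bar> powr p)"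
    unfolding set_lebesgue_integral_def by (intro integral_nonneg_AE AE_I2) (simp add: indicator_def)
  ultimately show ?thesis unfolding rayleigh_def by simp
qed

lemma lambda1_le_rayleigh:
  assumes "w1p0 p c d v g" "\<exists>x\<in>{c<..<d}. v x \<noteq> 0" "\<forall>x\<in>{c<..<d}. 0 \<le> r x"
  shows "lambda1 p r c d \<le> rayleigh p r c d v g"
  unfolding lambda1_eq_Inf_rayleigh
  by (rule cInf_lower) (use assms rayleigh_nonneg[OF assms(3)] in \<open>auto intro: bdd_belowI[of _ 0]\<close>)

lemma lambda1_greatest:
  assumes "c < d" "0 < p"
    and "\<And>v g. w1p0 p c d v g \<Longrightarrow> \<exists>x\<in>{c<..<d}. v x \<noteq> 0 \<Longrightarrow>
      K \<le> rayleigh p r c d v g"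
  shows "K \<le> lambda1 p r c d"
  unfolding lambda1_eq_Inf_rayleigh
  by (rule cInf_greatest) (use assms w1p0_nontrivial_exists[OF assms(1,2)] in auto)

lemma lambda1_nonneg:
  assumes "c < d" "0 < p" "\<forall>x\<in>{c<..<d}. 0 \<le> r x"
  shows "0 \<le> lambda1 p r c d"
  by (rule lambda1_greatest) (use assms rayleigh_nonneg[OF assms(3)] in auto)

lemma set_integral_mono_interior:
  fixes f h :: "real \<Rightarrow> real"
  assumes "set_integrable lborel {c..d} f" "set_integrable lborel {c..d} h"
    and "\<And>x. x \<in> {c<..<d} \<Longrightarrow> f x \<le> h x"
  shows "(LINT x:{c..d}|lborel. f x) \<le> (LINT x:{c..d}|lborel. h x)"
proof (rule set_integral_mono_AE[OF assms(1,2)])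
  show "AE x\<in>{c..d} in lborel. f x \<le> h x"
    using AE_lborel_neq_endpoints[of c d] by eventually_elim (use assms(3) in auto)
qed

lemma set_integral_weight_le:
  fixes f r :: "real \<Rightarrow> real"
  assumes "\<forall>x\<in>{c<..<d}. r x \<le> th" "0 \<le> th" "set_integrable lborel {c..d} f" "\<And>x. 0 \<le> f x"
  shows "(LINT x:{c..d}|lborel. r x * f x) \<le> th * (LINT x:{c..d}|lborel. f x)"
proof (cases "set_integrable lborel {c..d} (\<lambda>x. r x * f x)")
  case True
  have "(LINT x:{c..d}|lborel. r x * f x) \<le> (LINT x:{c..d}|lborel. th * f x)"
    by (rule set_integral_mono_interior[OF True set_integrable_mult_right[OF assms(3)]])
      (use assms in \<open>auto intro!: mult_right_mono\<close>)
  then show ?thesis by simp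
next
  case False
  then have "(LINT x:{c..d}|lborel. r x * f x) = 0"
    unfolding set_lebesgue_integral_def set_integrable_def by (simp add: not_integrable_integral_eq)
  moreover have "0 \<le> (LINT x:{c..d}|lborel. f x)"
    unfolding set_lebesgue_integral_def by (intro integral_nonneg_AE AE_I2) (simp add: assms(4))
  ultimately show ?thesis using assms(2) by simp
qed

lemma rayleigh_weight_ge:
  assumes "w1p0 p c d v g" "\<exists>x\<in>{c<..<d}. v x \<noteq> 0" "0 < p"
    and "0 < th" "\<forall>x\<in>{c<..<d}. th \<le> r x"
  shows "th * rayleigh p r c d v g \<le> rayleigh p (\<lambda>_. 1) c d v g"
proof -
  define N where "N = (LINT t:{c..d}|lborel. \<bar>g t\<bar> powr p)"
  define D where "D = (LINT t:{c..d}|lborel. \<bar>v t\<bar> powr p)"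
  define Dr where "Dr = (LINT t:{c..d}|lborel. r t * \<bar>v t\<bar> powr p)"
  have N: "0 \<le> N" unfolding N_def set_lebesgue_integral_def
    by (intro integral_nonneg_AE AE_I2) (simp add: indicator_def)
  obtain x where "x \<in> {c<..<d}" "v x \<noteq> 0" using assms(2) by blast
  note vp = w1p0_abs_powr_integral_pos[OF assms(1,3) this]
  have "th * N / Dr \<le> N / D"
  proof (cases "set_integrable lborel {c..d} (\<lambda>t. r t * \<bar>v t\<bar> powr p)")
    case True
    have "(LINT t:{c..d}|lborel. th * \<bar>v t\<bar> powr p) \<le> Dr"
      unfolding Dr_def
      by (rule set_integral_mono_interior[OF set_integrable_mult_right[OF vp(1)] True])
        (use assms in \<open>auto intro!: mult_right_mono\<close>)
    then have "th * D \<le> Dr"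
      unfolding D_def by simp
    moreover have "0 < D" unfolding D_def using vp(2) .
    ultimately have "0 < Dr" "th * N * D \<le> N * Dr"
      using assms(4) mult_left_mono[OF \<open>th * D \<le> Dr\<close> N]
      by (auto simp: ac_simps intro: less_le_trans[OF mult_pos_pos])
    then show ?thesis
      using \<open>0 < D\<close> by (simp add: divide_simps)
  next
    case False
    then have "Dr = 0"
      unfolding Dr_def set_lebesgue_integral_def set_integrable_def by (simp add: not_integrable_integral_eq)
    then show ?thesis using N vp(2) unfolding D_def by simp
  qed
  then show ?thesis unfolding rayleigh_def N_def D_def Dr_def by simp
qed

lemma lambda1_weight_ge:
  assumes "c < d" "0 < p" "0 < th" "\<forall>x\<in>{c<..<d}. th \<le> r x"
  shows "th * lambda1 p r c d \<le> lambda1 p (\<lambda>_. 1) c d"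
proof (rule lambda1_greatest[OF assms(1,2)])
  fix v g assume "w1p0 p c d v g" "\<exists>x\<in>{c<..<d}. v x \<noteq> 0"
  moreover have "\<forall>x\<in>{c<..<d}. 0 \<le> r x" using assms(3,4) by (meson order.trans less_imp_le)
  ultimately have "th * lambda1 p r c d \<le> th * rayleigh p r c d v g"
    using assms(3) by (intro mult_left_mono lambda1_le_rayleigh) auto
  also have "\<dots> \<le> rayleigh p (\<lambda>_. 1) c d v g"
    by (rule rayleigh_weight_ge) fact+
  finally show "th * lambda1 p r c d \<le> rayleigh p (\<lambda>_. 1) c d v g" .
qed

section \<open>Scaling and the Poincare inequality\<close>

lemma indicator_affine:
  assumes "0 < (h::real)"
  shows "indicator {\<alpha> + h*lo .. \<alpha> + h*hi} (\<alpha> + h*t) = (indicator {lo..hi} t :: real)"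
  using assms by (auto simp: indicator_def)

lemma set_integrable_affine_iff:
  fixes F :: "real \<Rightarrow> real"
  assumes "0 < h"
  shows "set_integrable lborel {lo..hi} (\<lambda>t. F (\<alpha> + h*t)) \<longleftrightarrow>
    set_integrable lborel {\<alpha> + h*lo .. \<alpha> + h*hi} F"
proof -
  have "set_integrable lborel {\<alpha> + h*lo .. \<alpha> + h*hi} F \<longleftrightarrow>
      integrable lborel (\<lambda>t. (\<lambda>y. indicator {\<alpha> + h*lo .. \<alpha> + h*hi} y *\<^sub>R F y) (\<alpha> + h*t))"
    unfolding set_integrable_def
    by (rule lborel_integrable_real_affine_iff[symmetric]) (use assms in auto)
  then show ?thesis unfolding set_integrable_def using assms by (simp add: indicator_affine)
qed

lemma set_integral_affine:
  fixes F :: "real \<Rightarrow> real"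
  assumes "0 < h"
  shows "(LINT t:{lo..hi}|lborel. F (\<alpha> + h*t)) = (LINT y:{\<alpha> + h*lo .. \<alpha> + h*hi}|lborel. F y) / h"
proof -
  have "(LINT y:{\<alpha> + h*lo .. \<alpha> + h*hi}|lborel. F y) =
      \<bar>h\<bar> *\<^sub>R
        (\<integral>t. (\<lambda>y. indicator {\<alpha> + h*lo .. \<alpha> + h*hi} y *\<^sub>R F y) (\<alpha> + h*t) \<partial>lborel)"
    unfolding set_lebesgue_integral_def
    by (rule lborel_integral_real_affine) (use assms in auto)
  also have "\<dots> = h * (LINT t:{lo..hi}|lborel. F (\<alpha> + h*t))"
    unfolding set_lebesgue_integral_def using assms by (simp add: indicator_affine)
  finally show ?thesis using assms by simp
qed

lemma w1p0_affine:
  assumes V: "w1p0 p c' d' v g" and h: "0 < h" and c': "c' = \<alpha> + h*c" and d': "d' = \<alpha> + h*d"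
  shows "w1p0 p c d (\<lambda>t. v (\<alpha> + h*t)) (\<lambda>t. h * g (\<alpha> + h*t))"
  unfolding w1p0_def
proof (intro conjI ballI)
  have gi: "set_integrable lborel {c'..d'} g" "set_integrable lborel {c'..d'} (\<lambda>t. \<bar>g t\<bar> powr p)"
    using V unfolding w1p0_def by auto
  show "set_integrable lborel {c..d} (\<lambda>t. h * g (\<alpha> + h*t))"
    using set_integrable_affine_iff[OF h, where lo=c and hi=d and F=g] gi(1) c' d' by (simp add: set_integrable_mult_right)
  have "(\<lambda>t. \<bar>h * g (\<alpha> + h*t)\<bar> powr p) = (\<lambda>t. h powr p * \<bar>g (\<alpha> + h*t)\<bar> powr p)"
    using h by (simp add: abs_mult powr_mult)
  then show "set_integrable lborel {c..d} (\<lambda>t. \<bar>h * g (\<alpha> + h*t)\<bar> powr p)"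
    using set_integrable_affine_iff[OF h, where lo=c and hi=d and F="\<lambda>y. \<bar>g y\<bar> powr p"] gi(2) c' d'
    by (simp add: set_integrable_mult_right)
  show "v (\<alpha> + h*c) = 0" "v (\<alpha> + h*d) = 0" using V c' d' unfolding w1p0_def by auto
  fix x assume x: "x \<in> {c..d}"
  have "\<alpha> + h*x \<in> {c'..d'}"
    using x h c' d' by (auto intro: mult_left_mono)
  then have "v (\<alpha> + h*x) = (LINT y:{\<alpha> + h*c..\<alpha> + h*x}|lborel. g y)"
    using V c' unfolding w1p0_def by auto
  also have "\<dots> = (LINT t:{c..x}|lborel. h * g (\<alpha> + h*t))"
    using set_integral_affine[OF h, where F=g and lo=c and hi=x and \<alpha>=\<alpha>] h by simp
  finally show "v (\<alpha> + h*x) = (LINT t:{c..x}|lborel. h * g (\<alpha> + h*t))" .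
qed

lemma rayleigh_affine:
  assumes h: "0 < h" and c': "c' = \<alpha> + h*c" and d': "d' = \<alpha> + h*d"
  shows "rayleigh p (\<lambda>_. 1) c d (\<lambda>t. v (\<alpha> + h*t)) (\<lambda>t. h * g (\<alpha> + h*t)) =
    h powr p * rayleigh p (\<lambda>_. 1) c' d' v g"
proof -
  have "(LINT t:{c..d}|lborel. \<bar>h * g (\<alpha> + h*t)\<bar> powr p) =
      h powr p * ((LINT y:{c'..d'}|lborel. \<bar>g y\<bar> powr p) / h)"
    using set_integral_affine[OF h, where F="\<lambda>y. \<bar>g y\<bar> powr p" and lo=c and hi=d and \<alpha>=\<alpha>]
      h c' d'
    by (simp add: abs_mult powr_mult)
  moreover have "(LINT t:{c..d}|lborel. \<bar>v (\<alpha> + h*t)\<bar> powr p) =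
      (LINT y:{c'..d'}|lborel. \<bar>v y\<bar> powr p) / h"
    using set_integral_affine[OF h, where F="\<lambda>y. \<bar>v y\<bar> powr p" and lo=c and hi=d and \<alpha>=\<alpha>] c' d'
    by simp
  ultimately show ?thesis
    unfolding rayleigh_def using h by simp
qed

lemma lambda1_affine_le:
  assumes "c < d" "c' < d'" "0 < p"
  shows "lambda1 p (\<lambda>_. 1) c d * (d - c) powr p \<le> lambda1 p (\<lambda>_. 1) c' d' * (d' - c') powr p"
proof -
  define h where "h = (d' - c') / (d - c)"
  define \<alpha> where "\<alpha> = c' - h * c"
  have h: "0 < h" "h * (d - c) = d' - c'" unfolding h_def using assms by auto
  have c': "c' = \<alpha> + h * c" and d': "d' = \<alpha> + h * d"
    unfolding \<alpha>_def using h(2) by (auto simp: algebra_simps)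
  have "lambda1 p (\<lambda>_. 1) c d / h powr p \<le> lambda1 p (\<lambda>_. 1) c' d'"
  proof (rule lambda1_greatest[OF assms(2,3)])
    fix v g assume V: "w1p0 p c' d' v g" and "\<exists>x\<in>{c'<..<d'}. v x \<noteq> 0"
    then obtain x where "x \<in> {c'<..<d'}" "v x \<noteq> 0" by blast
    moreover have "\<alpha> + h * ((x - \<alpha>) / h) = x" using h by simp
    moreover have "(x - \<alpha>) / h \<in> {c<..<d} \<longleftrightarrow> x \<in> {c'<..<d'}"
      using h c' d' by (auto simp: field_simps)
    ultimately have "\<exists>t\<in>{c<..<d}. v (\<alpha> + h*t) \<noteq> 0" by metis
    then have "lambda1 p (\<lambda>_. 1) c d \<le>
        rayleigh p (\<lambda>_. 1) c d (\<lambda>t. v (\<alpha> + h*t)) (\<lambda>t. h * g (\<alpha> + h*t))"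
      using lambda1_le_rayleigh w1p0_affine[OF V h(1) c' d'] by force
    then show "lambda1 p (\<lambda>_. 1) c d / h powr p \<le> rayleigh p (\<lambda>_. 1) c' d' v g"
      using h(1) unfolding rayleigh_affine[OF h(1) c' d'] by (simp add: divide_simps mult.commute)
  qed
  moreover have "(d' - c') powr p = h powr p * (d - c) powr p"
    using assms h by (simp add: powr_mult[symmetric])
  ultimately show ?thesis
    using h(1) by (simp add: divide_simps mult_right_mono mult.assoc[symmetric])
qed

lemma lambda1_const_weight_eq:
  assumes "c < d" "0 < p"
  shows "lambda1 p (\<lambda>_. 1) c d = lambda1 p (\<lambda>_. 1) 0 1 * (d - c) powr (- p)"
proof -
  have "lambda1 p (\<lambda>_. 1) c d * (d - c) powr p = lambda1 p (\<lambda>_. 1) 0 1"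
    using lambda1_affine_le[OF assms(1) _ assms(2), of 0 1] lambda1_affine_le[OF _ assms(1,2), of 0 1]
    by simp
  then show ?thesis using assms by (simp add: powr_minus_divide field_simps)
qed

(* The tangent line of |y|^p at |y| = M; integrated over [0,1] with M the mean of |g| it
   yields Jensen's inequality M^p <= mean of |g|^p. *)
lemma Youngs_inequality_abs_powr:
  fixes y M p :: real
  assumes "1 < p" "0 < M"
  shows "\<bar>y\<bar> \<le> \<bar>y\<bar> powr p / (p * M powr (p - 1)) + M * (p - 1) / p"
proof -
  define q where "q = p / (p - 1)"
  have q: "1 < q" "1/p + 1/q = 1" using assms unfolding q_def by (auto simp: field_simps)
  have "\<bar>y\<bar> / M * 1 \<le> (\<bar>y\<bar> / M) powr p / p + 1 powr q / q"
    by (rule Youngs_inequality) (use assms q in auto)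
  then have "\<bar>y\<bar> \<le> M * ((\<bar>y\<bar> / M) powr p / p + 1 / q)"
    using assms by (simp add: field_simps)
  also have "\<dots> = \<bar>y\<bar> powr p / (p * M powr (p - 1)) + M * (p - 1) / p"
    using assms unfolding q_def by (simp add: powr_divide powr_diff field_simps)
  finally show ?thesis .
qed

lemma powr_set_integral_abs_le:
  fixes g :: "real \<Rightarrow> real"
  assumes p: "1 < p"
    and gi: "set_integrable lborel {0..1} g" and gpi: "set_integrable lborel {0..1} (\<lambda>t. \<bar>g t\<bar> powr p)"
  shows "(LINT t:{0..1}|lborel. \<bar>g t\<bar>) powr p \<le> (LINT t:{0..1}|lborel. \<bar>g t\<bar> powr p)"
proof -
  define A where "A = (LINT t:{0..1}|lborel. \<bar>g t\<bar> powr p)"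
  define M where "M = (LINT t:{0..1}|lborel. \<bar>g t\<bar>)"
  have A: "0 \<le> A" and M: "0 \<le> M"
    unfolding A_def M_def set_lebesgue_integral_def
    by (intro integral_nonneg_AE AE_I2; simp add: indicator_def)+
  have const: "set_integrable lborel {0..1::real} (\<lambda>_. C)" for C :: real
    by (rule borel_integrable_atLeastAtMost') (intro continuous_intros)
  show ?thesis
  proof (cases "M = 0")
    case False
    then have "0 < M" using M by simp
    have "(LINT t:{0..1}|lborel. \<bar>g t\<bar>) \<le>
        (LINT t:{0..1}|lborel. \<bar>g t\<bar> powr p / (p * M powr (p - 1)) + M * (p - 1) / p)"
      by (rule set_integral_mono)
        (use set_integrable_abs[OF gi] gpi const Youngs_inequality_abs_powr[OF p \<open>0 < M\<close>] in auto)
    then have "M \<le> (LINT t:{0..1}|lborel. \<bar>g t\<bar> powr p / (p * M powr (p - 1)) + M * (p - 1) / p)"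
      by (simp only: M_def)
    also have "\<dots> = A / (p * M powr (p - 1)) + M * (p - 1) / p"
      using gpi const[of "M * (p - 1) / p"] unfolding A_def
      by (subst set_integral_add(2)) (auto simp: set_integral_const simp del: set_integral_mult_right)
    finally have "M * M powr (p - 1) \<le> A"
      using p \<open>0 < M\<close> by (simp add: field_simps)
    then show ?thesis
      using \<open>0 < M\<close> unfolding A_def M_def by (simp add: powr_diff field_simps)
  qed (use A in \<open>simp add: A_def M_def\<close>)
qed

lemma poincare_unit_interval:
  assumes V: "w1p0 p 0 1 v g" and p: "1 < p"
  shows "(LINT t:{0..1}|lborel. \<bar>v t\<bar> powr p) \<le> (LINT t:{0..1}|lborel. \<bar>g t\<bar> powr p)"
proof -
  define M where "M = (LINT t:{0..1}|lborel. \<bar>g t\<bar>)"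
  have gi: "set_integrable lborel {0..1} g" and gpi: "set_integrable lborel {0..1} (\<lambda>t. \<bar>g t\<bar> powr p)"
    using V unfolding w1p0_def by auto
  have bound: "\<bar>v x\<bar> \<le> M" if x: "x \<in> {0..1}" for x
  proof -
    have gix: "set_integrable lborel {0..x} g"
      by (rule set_integrable_subset[OF gi]) (use x in auto)
    have "\<bar>v x\<bar> = \<bar>LINT t:{0..x}|lborel. g t\<bar>" using V x unfolding w1p0_def by auto
    also have "\<dots> \<le> (LINT t:{0..x}|lborel. \<bar>g t\<bar>)"
      using set_integral_norm_bound[OF gix] by simp
    also have "\<dots> \<le> M"
      unfolding M_def set_lebesgue_integral_def
      by (rule integral_mono[OF _ set_integrable_abs[OF gi, unfolded set_integrable_def]])
        (use x set_integrable_abs[OF gix, unfolded set_integrable_def] in \<open>auto simp: indicator_def\<close>)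
    finally show ?thesis .
  qed
  have "(LINT t:{0..1}|lborel. \<bar>v t\<bar> powr p) \<le> (LINT t:{0..1::real}|lborel. M powr p)"
  proof (rule set_integral_mono)
    show "set_integrable lborel {0..1} (\<lambda>t. \<bar>v t\<bar> powr p)"
      using borel_integrable_atLeastAtMost'[OF continuous_on_abs_powr[OF continuous_on_w1p0[OF V]]] p
      by simp
    show "set_integrable lborel {0..1::real} (\<lambda>t. M powr p)"
      by (rule borel_integrable_atLeastAtMost') (intro continuous_intros)
  qed (use bound p in \<open>auto intro: powr_mono2\<close>)
  also have "\<dots> = M powr p" by (simp add: set_integral_const)
  also have "\<dots> \<le> (LINT t:{0..1}|lborel. \<bar>g t\<bar> powr p)"
    unfolding M_def by (rule powr_set_integral_abs_le[OF p gi gpi])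
  finally show ?thesis .
qed

lemma lambda1_unit_interval_ge_one:
  assumes "1 < p"
  shows "1 \<le> lambda1 p (\<lambda>_. 1) 0 1"
proof (rule lambda1_greatest)
  fix v g assume V: "w1p0 p 0 1 v g" and "\<exists>x\<in>{0<..<1::real}. v x \<noteq> 0"
  then have "0 < (LINT t:{0..1}|lborel. \<bar>v t\<bar> powr p)"
    using w1p0_abs_powr_integral_pos(2)[OF V] assms by force
  with poincare_unit_interval[OF V assms] show "1 \<le> rayleigh p (\<lambda>_. 1) 0 1 v g"
    unfolding rayleigh_def by simp
qed (use assms in auto)

lemma mu1_le_if_lambda1_le:
  assumes "c < d" "1 < p" "lambda1 p (\<lambda>_. 1) c d \<le> lambda1 p (\<lambda>_. 1) 0 1 * X"
  shows "mu1 p (d - c) \<le> pi_p p powr p * X"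
proof -
  have "lambda1 p (\<lambda>_. 1) 0 1 * (d - c) powr (- p) \<le> lambda1 p (\<lambda>_. 1) 0 1 * X"
    using assms lambda1_const_weight_eq[of c d p] by simp
  then have "(d - c) powr (- p) \<le> X"
    using lambda1_unit_interval_ge_one[OF assms(2)] by simp
  then show ?thesis
    unfolding mu1_def by (simp add: mult_left_mono)
qed

section \<open>The minimax levels over partitions\<close>

definition partition_cost ::
    "bool \<Rightarrow> real \<Rightarrow> (real \<Rightarrow> real) \<Rightarrow> (real \<Rightarrow> real) \<Rightarrow> nat \<Rightarrow> real \<Rightarrow> (nat \<Rightarrow> real) \<Rightarrow>
      real" where
  "partition_cost pos p m n k s t =
     Max ((\<lambda>j. if odd j = pos then s * lambda1 p m (t (j - 1)) (t j) else lambda1 p n (t (j - 1)) (t j))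
          ` {1..Suc k})"

lemma cpm_eq_Inf_partition_cost:
  "cpm pos p m n a b k s = Inf (partition_cost pos p m n k s ` {t. partition a b k t})"
  unfolding cpm_def partition_cost_def ..

lemma partition_le:
  assumes "partition a b k t" "i \<le> j" "j \<le> Suc k"
  shows "t i \<le> t j"
  using assms(2,3)
proof (induction j)
  case (Suc j)
  then show ?case
    using assms(1) unfolding partition_def by (cases "i = Suc j") force+
qed simp

lemma partition_equidistant:
  assumes "a < b"
  shows "partition a b k (\<lambda>j. a + real j * ((b - a) / real (Suc k)))"
  unfolding partition_def using mult_strict_right_mono[OF assms, of "1 + real k"] by (auto simp: field_simps)

lemma partition_cost_nonneg:
  assumes t: "partition a b k t" and "0 < p" "0 \<le> s"
    and mn: "\<forall>x\<in>{a<..<b}. 0 \<le> m x \<and> 0 \<le> n x"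
  shows "0 \<le> partition_cost pos p m n k s t"
proof -
  have "t 0 = a" "t 0 < t 1" "t 1 \<le> b"
    using t partition_le[OF t, of 1 "Suc k"] unfolding partition_def by auto
  then have "0 \<le> lambda1 p m (t 0) (t 1)" "0 \<le> lambda1 p n (t 0) (t 1)"
    using mn \<open>0 < p\<close> by (auto intro!: lambda1_nonneg)
  then have "0 \<le> (if odd (1::nat) = pos then s * lambda1 p m (t 0) (t 1) else lambda1 p n (t 0) (t 1))"
    using \<open>0 \<le> s\<close> by simp
  also have "\<dots> \<le> partition_cost pos p m n k s t"
    unfolding partition_cost_def
    by (rule Max_ge[OF finite_imageI[OF finite_atLeastAtMost] image_eqI[where x=1]]) auto
  finally show ?thesis .
qed

lemma cpm_le_partition_cost:
  assumes "partition a b k t" "0 < p" "0 \<le> s" "\<forall>x\<in>{a<..<b}. 0 \<le> m x \<and> 0 \<le> n x"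
  shows "cpm pos p m n a b k s \<le> partition_cost pos p m n k s t"
  unfolding cpm_eq_Inf_partition_cost
  by (rule cInf_lower) (use assms partition_cost_nonneg[OF _ assms(2-4)] in \<open>auto intro: bdd_belowI[of _ 0]\<close>)

lemma cpm_nonneg:
  assumes "a < b" "0 < p" "0 \<le> s" "\<forall>x\<in>{a<..<b}. 0 \<le> m x \<and> 0 \<le> n x"
  shows "0 \<le> cpm pos p m n a b k s"
proof -
  from partition_equidistant[OF assms(1)] show ?thesis
    unfolding cpm_eq_Inf_partition_cost
    by (intro cInf_greatest) (use partition_cost_nonneg[OF _ assms(2-4)] in auto)
qed

lemma partition_cost_le:
  assumes "0 \<le> s" "0 \<le> B"
    and "\<And>j. j \<in> {1..Suc k} \<Longrightarrow>
      lambda1 p m (t (j - 1)) (t j) \<le> B \<and> lambda1 p n (t (j - 1)) (t j) \<le> B"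
  shows "partition_cost pos p m n k s t \<le> max s 1 * B"
  unfolding partition_cost_def
proof (rule Max.boundedI)
  fix y assume "y \<in> (\<lambda>j. if odd j = pos then s * lambda1 p m (t (j - 1)) (t j)
      else lambda1 p n (t (j - 1)) (t j)) ` {1..Suc k}"
  then obtain j where "j \<in> {1..Suc k}"
    and y: "y = (if odd j = pos then s * lambda1 p m (t (j - 1)) (t j) else lambda1 p n (t (j - 1)) (t j))"
    by blast
  with assms(3) have "lambda1 p m (t (j - 1)) (t j) \<le> B" "lambda1 p n (t (j - 1)) (t j) \<le> B"
    by auto
  moreover have "s * B \<le> max s 1 * B" "1 * B \<le> max s 1 * B"
    using assms(2) by (intro mult_right_mono; simp)+
  moreover have "s * lambda1 p m (t (j - 1)) (t j) \<le> s * B"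
    using calculation(1) assms(1) by (rule mult_left_mono)
  ultimately show "y \<le> max s 1 * B"
    unfolding y by auto
qed (simp_all only: finite_imageI finite_atLeastAtMost image_is_empty, simp)

lemma cpm_le_equipartition:
  assumes ab: "a < b" and p: "0 < p" and s: "0 \<le> s" and th: "0 < th"
    and mn: "\<forall>x\<in>{a<..<b}. th \<le> m x \<and> th \<le> n x"
  shows "cpm pos p m n a b k s \<le>
    max s 1 / th * (lambda1 p (\<lambda>_. 1) 0 1 * (real (k + 1) powr p * (b - a) powr (- p)))"
proof -
  define L where "L = (b - a) / real (Suc k)"
  define t where "t = (\<lambda>j::nat. a + real j * L)"
  have L: "0 < L" unfolding L_def using ab by simp
  have t: "partition a b k t"
    unfolding t_def L_def using partition_equidistant[OF ab] .
  have "\<forall>x\<in>{a<..<b}. 0 \<le> m x \<and> 0 \<le> n x"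
    using mn th by (meson less_le_trans less_imp_le)
  then have "cpm pos p m n a b k s \<le> partition_cost pos p m n k s t"
    by (rule cpm_le_partition_cost[OF t p s])
  also have "\<dots> \<le> max s 1 * (lambda1 p (\<lambda>_. 1) 0 1 * L powr (- p) / th)"
  proof (rule partition_cost_le[OF s])
    show "0 \<le> lambda1 p (\<lambda>_. 1) 0 1 * L powr (- p) / th"
      using lambda1_nonneg[of 0 1 p "\<lambda>_. 1"] p th by simp
    fix j assume j: "j \<in> {1..Suc k}"
    have piece: "t (j - 1) < t j" "t j - t (j - 1) = L" "a \<le> t (j - 1)" "t j \<le> b"
      using partition_le[OF t, of 0 "j - 1"] partition_le[OF t, of j "Suc k"] t j L
      unfolding partition_def t_def by (auto simp: of_nat_diff algebra_simps)
    have "lambda1 p (\<lambda>_. 1) (t (j - 1)) (t j) = lambda1 p (\<lambda>_. 1) 0 1 * L powr (- p)"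
      using lambda1_const_weight_eq[OF piece(1) p] piece(2) by simp
    moreover have "th * lambda1 p m (t (j - 1)) (t j) \<le> lambda1 p (\<lambda>_. 1) (t (j - 1)) (t j)"
      "th * lambda1 p n (t (j - 1)) (t j) \<le> lambda1 p (\<lambda>_. 1) (t (j - 1)) (t j)"
      using piece mn by (auto intro!: lambda1_weight_ge p th)
    ultimately show "lambda1 p m (t (j - 1)) (t j) \<le> lambda1 p (\<lambda>_. 1) 0 1 * L powr (- p) / th \<and>
        lambda1 p n (t (j - 1)) (t j) \<le> lambda1 p (\<lambda>_. 1) 0 1 * L powr (- p) / th"
      using th by (simp add: pos_le_divide_eq mult.commute)
  qed
  also have "\<dots> = max s 1 / th * (lambda1 p (\<lambda>_. 1) 0 1 * (real (k + 1) powr p * (b - a) powr (- p)))"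
    unfolding L_def using ab by (simp add: powr_divide powr_minus field_simps)
  finally show ?thesis .
qed

section \<open>Nodal domains\<close>

lemma nodal_domain_False_iff:
  "nodal_domain False u a b c d \<longleftrightarrow> nodal_domain True (\<lambda>x. - u x) a b c d"
  unfolding nodal_domain_def by simp

lemma nodal_domain_nonneg:
  assumes "nodal_domain True u a b c d" "continuous_on {a..b} u" "x \<in> {c..d}"
  shows "0 \<le> u x"
proof -
  have "c < d" "a \<le> c" "d \<le> b" "\<forall>x\<in>{c<..<d}. 0 < u x"
    using assms(1) unfolding nodal_domain_def by auto
  then show ?thesis
    using continuous_ge_on_closure[of "{c<..<d}" u x 0] continuous_on_subset[OF assms(2)] assms(3)
    by fastforce
qed

lemma continuous_on_pos_nbhd:
  fixes u :: "real \<Rightarrow> real"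
  assumes "continuous_on S u" "x \<in> S" "0 < u x"
  obtains e where "0 < e" "\<And>y. y \<in> S \<Longrightarrow> dist y x < e \<Longrightarrow> 0 < u y"
proof -
  obtain e where "0 < e" "\<And>y. y \<in> S \<Longrightarrow> dist y x < e \<Longrightarrow> dist (u y) (u x) < u x"
    using assms unfolding continuous_on_iff by metis
  then show ?thesis
    using that by (force simp: dist_real_def)
qed

lemma nodal_domain_endpoints:
  assumes N: "nodal_domain True u a b c d" and cont: "continuous_on {a..b} u"
    and "u a = 0" "u b = 0"
  shows "u c = 0" "u d = 0"
proof -
  have cd: "c < d" "a \<le> c" "d \<le> b" and pos: "\<forall>x\<in>{c<..<d}. 0 < u x"
    and maximal: "\<And>c' d'. c' \<le> c \<Longrightarrow> d \<le> d' \<Longrightarrow> a \<le> c' \<Longrightarrow> d' \<le> b \<Longrightarrow>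
        \<forall>x\<in>{c'<..<d'}. 0 < u x \<Longrightarrow> c' = c \<and> d' = d"
    using N unfolding nodal_domain_def by auto
  show "u c = 0"
  proof (rule ccontr)
    assume "u c \<noteq> 0"
    then have "0 < u c" using nodal_domain_nonneg[OF N cont, of c] cd by fastforce
    then have "a < c" using \<open>u a = 0\<close> cd by (cases "a = c") auto
    obtain e where e: "0 < e" "\<And>y. y \<in> {a..b} \<Longrightarrow> dist y c < e \<Longrightarrow> 0 < u y"
      using continuous_on_pos_nbhd[OF cont _ \<open>0 < u c\<close>] cd by auto
    define c' where "c' = max a (c - e / 2)"
    have "\<forall>x\<in>{c'<..<d}. 0 < u x"
      using pos e cd unfolding c'_def by (force simp: dist_real_def)
    then have "c' = c" using maximal[of c' d] cd e(1) unfolding c'_def by auto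
    moreover have "c' < c" unfolding c'_def using \<open>a < c\<close> e by auto
    ultimately show False by simp
  qed
  show "u d = 0"
  proof (rule ccontr)
    assume "u d \<noteq> 0"
    then have "0 < u d" using nodal_domain_nonneg[OF N cont, of d] cd by fastforce
    then have "d < b" using \<open>u b = 0\<close> cd by (cases "d = b") auto
    obtain e where e: "0 < e" "\<And>y. y \<in> {a..b} \<Longrightarrow> dist y d < e \<Longrightarrow> 0 < u y"
      using continuous_on_pos_nbhd[OF cont _ \<open>0 < u d\<close>] cd by auto
    define d' where "d' = min b (d + e / 2)"
    have "\<forall>x\<in>{c<..<d'}. 0 < u x"
      using pos e cd unfolding d'_def by (force simp: dist_real_def)
    then have "d' = d" using maximal[of c d'] cd e(1) unfolding d'_def by auto
    moreover have "d < d'" unfolding d'_def using \<open>d < b\<close> e by auto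
    ultimately show False by simp
  qed
qed

lemma abs_powr_minus_two_mult_self: "\<bar>y\<bar> powr (p - 2) * y * y = \<bar>y::real\<bar> powr p"
proof -
  have "\<bar>y\<bar> powr (p - 2) * \<bar>y\<bar> powr 2 = \<bar>y\<bar> powr p"
    unfolding powr_add[symmetric] by simp
  moreover have "\<bar>y\<bar> powr 2 = y * y" by (simp add: power2_eq_square[symmetric])
  ultimately show ?thesis by (simp add: mult.assoc)
qed

lemma energy_identity_subinterval:
  fixes f :: "real \<Rightarrow> real"
  assumes U: "w1p0 p a b u g"
    and weak: "\<forall>\<phi> \<psi>. w1p0 p a b \<phi> \<psi> \<longrightarrow>
      (LINT x:{a..b}|lborel. \<bar>g x\<bar> powr (p - 2) * g x * \<psi> x) = (LINT x:{a..b}|lborel. f x * \<phi> x)"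
    and cd: "a \<le> c" "c < d" "d \<le> b" and "u c = 0" "u d = 0"
  shows "(LINT x:{c..d}|lborel. \<bar>g x\<bar> powr p) = (LINT x:{c..d}|lborel. f x * u x)"
proof -
  have restrict: "(LINT x:{a..b}|lborel. indicator {c..d} x * F x) = (LINT x:{c..d}|lborel. F x)"
    for F :: "real \<Rightarrow> real"
    unfolding set_lebesgue_integral_def
    by (rule Bochner_Integration.integral_cong) (use cd in \<open>auto simp: indicator_def\<close>)
  have lhs: "(\<lambda>x. \<bar>g x\<bar> powr (p - 2) * g x * (indicator {c..d} x * g x)) =
      (\<lambda>x. indicator {c..d} x * \<bar>g x\<bar> powr p)"
  proof
    fix x
    show "\<bar>g x\<bar> powr (p - 2) * g x * (indicator {c..d} x * g x) = indicator {c..d} x * \<bar>g x\<bar> powr p"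
      using abs_powr_minus_two_mult_self[of "g x" p] by (cases "x \<in> {c..d}") simp_all
  qed
  have rhs: "(\<lambda>x. f x * (if x \<in> {c..d} then u x else 0)) = (\<lambda>x. indicator {c..d} x * (f x * u x))"
    by (auto simp: indicator_def)
  show ?thesis
    using weak[rule_format, OF w1p0_extend_zero[OF U cd assms(6,7)]] unfolding lhs rhs restrict .
qed

lemma lambda1_le_of_energy_identity:
  assumes U: "w1p0 p c d u g" and "1 < p" and "x \<in> {c<..<d}" "u x \<noteq> 0"
    and r: "\<forall>x\<in>{c<..<d}. r x \<le> th" "0 \<le> th" and "0 \<le> \<Lambda>"
    and energy: "(LINT t:{c..d}|lborel. \<bar>g t\<bar> powr p) =
      \<Lambda> * (LINT t:{c..d}|lborel. r t * \<bar>u t\<bar> powr p)"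
  shows "lambda1 p (\<lambda>_. 1) c d \<le> \<Lambda> * th"
proof -
  define D where "D = (LINT t:{c..d}|lborel. \<bar>u t\<bar> powr p)"
  note u = w1p0_abs_powr_integral_pos[OF U _ assms(3,4)]
  have "0 < D" unfolding D_def using u assms(2) by simp
  have "lambda1 p (\<lambda>_. 1) c d \<le> rayleigh p (\<lambda>_. 1) c d u g"
    using lambda1_le_rayleigh[OF U] assms(3,4) by force
  also have "\<dots> = \<Lambda> * (LINT t:{c..d}|lborel. r t * \<bar>u t\<bar> powr p) / D"
    unfolding rayleigh_def D_def energy by simp
  also have "\<dots> \<le> \<Lambda> * (th * D) / D"
    using set_integral_weight_le[OF r u(1)] assms(2,7) \<open>0 < D\<close> unfolding D_def
    by (intro divide_right_mono mult_left_mono) auto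
  also have "\<dots> = \<Lambda> * th" using \<open>0 < D\<close> by simp
  finally show ?thesis .
qed

lemma fucik_term_mult_self:
  fixes y \<alpha> \<beta> M N p :: real
  defines "F \<equiv> (\<alpha> * M * max y 0 powr (p - 1) - \<beta> * N * max (- y) 0 powr (p - 1)) * y"
  shows "0 \<le> y \<Longrightarrow> F = \<alpha> * M * \<bar>y\<bar> powr p"
    and "y \<le> 0 \<Longrightarrow> F = \<beta> * N * \<bar>y\<bar> powr p"
proof -
  have pm1: "z powr (p - 1) * z = z powr p" if "0 \<le> z" for z :: real
    using that by (cases "z = 0") (simp_all add: powr_diff)
  show "0 \<le> y \<Longrightarrow> F = \<alpha> * M * \<bar>y\<bar> powr p"
    using pm1[of y] unfolding F_def by (simp add: max_def mult.assoc)
  assume "y \<le> 0"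
  then have "(- y) powr (p - 1) * y = - ((- y) powr p)"
    using pm1[of "- y"] by simp
  with \<open>y \<le> 0\<close> show "F = \<beta> * N * \<bar>y\<bar> powr p"
    unfolding F_def by (simp add: max_def mult.assoc)
qed

lemma lambda1_nodal_domain_le:
  fixes m n :: "real \<Rightarrow> real"
  assumes U: "w1p0 p a b u g" and p: "1 < p"
    and weak: "\<forall>\<phi> \<psi>. w1p0 p a b \<phi> \<psi> \<longrightarrow>
      (LINT x:{a..b}|lborel. \<bar>g x\<bar> powr (p - 2) * g x * \<psi> x) =
      (LINT x:{a..b}|lborel.
        (\<alpha> * m x * (max (u x) 0) powr (p - 1) - \<beta> * n x * (max (- u x) 0) powr (p - 1)) * \<phi> x)"
    and N: "nodal_domain sg u a b c d"
    and "0 \<le> \<alpha>" "0 \<le> \<beta>" "0 \<le> th" "\<forall>x\<in>{a<..<b}. m x \<le> th \<and> n x \<le> th"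
  shows "lambda1 p (\<lambda>_. 1) c d \<le> (if sg then \<alpha> else \<beta>) * th"
proof -
  define v where "v = (\<lambda>x. if sg then u x else - u x)"
  have Nv: "nodal_domain True v a b c d"
    using N nodal_domain_False_iff unfolding v_def by (cases sg) auto
  have cd: "a \<le> c" "c < d" "d \<le> b" and sign: "\<forall>x\<in>{c<..<d}. 0 < v x"
    using Nv unfolding nodal_domain_def by auto
  have cont: "continuous_on {a..b} v"
    unfolding v_def using continuous_on_w1p0[OF U] by (cases sg) (auto intro: continuous_on_minus)
  have "v a = 0" "v b = 0" using U unfolding w1p0_def v_def by auto
  then have "v c = 0" "v d = 0" using nodal_domain_endpoints[OF Nv cont] by auto
  then have uc: "u c = 0" "u d = 0" unfolding v_def by (cases sg; simp)+
  define \<Lambda> where "\<Lambda> = (if sg then \<alpha> else \<beta>)"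
  define r where "r = (\<lambda>x. if sg then m x else n x)"
  have "(\<alpha> * m x * max (u x) 0 powr (p - 1) - \<beta> * n x * max (- u x) 0 powr (p - 1)) * u x =
      \<Lambda> * (r x * \<bar>u x\<bar> powr p)" if "x \<in> {c..d}" for x
    using nodal_domain_nonneg[OF Nv cont that]
      fucik_term_mult_self[where y="u x" and M="m x" and N="n x" and p=p and \<alpha>=\<alpha> and \<beta>=\<beta>]
    unfolding v_def \<Lambda>_def r_def by (cases sg) simp_all
  then have "(LINT x:{c..d}|lborel. \<bar>g x\<bar> powr p) =
      (LINT x:{c..d}|lborel. \<Lambda> * (r x * \<bar>u x\<bar> powr p))"
    unfolding energy_identity_subinterval[OF U weak cd uc] by (intro set_lebesgue_integral_cong) auto
  then have energy: "(LINT x:{c..d}|lborel. \<bar>g x\<bar> powr p) =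
      \<Lambda> * (LINT x:{c..d}|lborel. r x * \<bar>u x\<bar> powr p)"
    by simp
  have r_le: "\<forall>x\<in>{c<..<d}. r x \<le> th" and "0 \<le> \<Lambda>"
    using assms(5,6,8) cd unfolding r_def \<Lambda>_def by auto
  obtain x where x: "c < x" "x < d" using dense[OF cd(2)] by blast
  then have "u x \<noteq> 0" using sign unfolding v_def by (cases sg) force+
  with lambda1_le_of_energy_identity[OF w1p0_restrict[OF U cd uc] p _ _ r_le assms(7) \<open>0 \<le> \<Lambda>\<close> energy] x
  show ?thesis unfolding \<Lambda>_def by simp
qed

lemma gamma_eq_max_divide: "0 < s \<Longrightarrow> gamma s = max s 1 / s"
  unfolding gamma_def by auto

theorem lemma4p5:
  fixes a b p s th_m th_p :: real and k :: nat and pos :: bool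
    and m n u g :: "real \<Rightarrow> real" and cp dp cn dn :: real
  assumes "a < b" and "1 < p" and "1 \<le> k"
    and "set_borel_measurable lborel {a<..<b} m"
    and "set_borel_measurable lborel {a<..<b} n"
    and "0 < th_m"
    and "\<forall>x\<in>{a<..<b}. th_m \<le> m x \<and> m x \<le> th_p \<and> th_m \<le> n x \<and> n x \<le> th_p"
    and "0 < s"
    and "w1p0 p a b u g"
    and "\<exists>x\<in>{a<..<b}. u x \<noteq> 0"
    and "\<forall>\<phi> \<psi>. w1p0 p a b \<phi> \<psi> \<longrightarrow>
           (LINT x:{a..b}|lborel. \<bar>g x\<bar> powr (p - 2) * g x * \<psi> x) =
           (LINT x:{a..b}|lborel.
              (cpm pos p m n a b k s / s * m x * (max (u x) 0) powr (p - 1)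
               - cpm pos p m n a b k s * n x * (max (- u x) 0) powr (p - 1)) * \<phi> x)"
    and "nodal_domain True u a b cp dp"
    and "nodal_domain False u a b cn dn"
  shows "mu1 p (dp - cp) \<le> th_p / th_m * (pi_p p powr p * real (k + 1) powr p * (b - a) powr (- p)) * gamma s
       \<and> mu1 p (dn - cn) \<le> th_p / th_m * (pi_p p powr p * real (k + 1) powr p * (b - a) powr (- p)) * s * gamma s"
proof -
  note ab = assms(1) and p = assms(2) and th_m = assms(6) and bounds = assms(7) and s = assms(8)
  define A where "A = cpm pos p m n a b k s"
  define K where "K = lambda1 p (\<lambda>_. 1) 0 1"
  define Z where "Z = real (k + 1) powr p * (b - a) powr (- p)"
  have "th_m \<le> th_p" using bounds dense[OF ab] by force
  have "0 \<le> A"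
    unfolding A_def using cpm_nonneg[OF ab _ _, of p s m n pos k] p s th_m bounds by force
  have A_le: "A \<le> max s 1 / th_m * (K * Z)"
    unfolding A_def K_def Z_def using cpm_le_equipartition[OF ab _ _ th_m] p s bounds by force
  have mu1_le: "mu1 p (d - c) \<le> pi_p p powr p * (th_p / th_m * Z * (if sg then gamma s else s * gamma s))"
    if N: "nodal_domain sg u a b c d" for sg c d
  proof (rule mu1_le_if_lambda1_le)
    have "lambda1 p (\<lambda>_. 1) c d \<le> (if sg then A / s else A) * th_p"
      using lambda1_nodal_domain_le[OF assms(9) p assms(11)[folded A_def] N] s \<open>0 \<le> A\<close>
        \<open>th_m \<le> th_p\<close> th_m bounds
      by force
    also have "\<dots> \<le> (if sg then max s 1 / th_m * (K * Z) / s else max s 1 / th_m * (K * Z)) * th_p"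
      using A_le divide_right_mono[OF A_le, of s] s \<open>th_m \<le> th_p\<close> th_m by (intro mult_right_mono) auto
    also have "\<dots> = K * (th_p / th_m * Z * (if sg then gamma s else s * gamma s))"
      using s by (simp add: gamma_eq_max_divide ac_simps)
    finally show "lambda1 p (\<lambda>_. 1) c d \<le>
        lambda1 p (\<lambda>_. 1) 0 1 * (th_p / th_m * Z * (if sg then gamma s else s * gamma s))"
      unfolding K_def .
  qed (use N p in \<open>auto simp: nodal_domain_def\<close>)
  from mu1_le[OF assms(12)] mu1_le[OF assms(13)] show ?thesis
    unfolding Z_def by (simp add: ac_simps)
qed

end
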